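(* Let $1\le p<\infty$, $q\in L^p(\mathbf{R}^n)$ and $G\subset\mathbf{R}^n$ open. Assume there exists $\lambda\in(0,1)$ such that \[L_q:=\Big(\int_{\mathbf{R}^n}\frac{\|q-q(\cdot-y)\|^p_{L^p(\mathbf{R}^n)}}{|y|^{n+\lambda p}}\,dy\Big)^{1/p}<+\infty.\] Then there exists a positive constant $C$, depending only on $n$, such that \[\|q\|_{L^p(G)}\le C\big(h^{-n/2}\|\mathcal{T}_hq\|_{L^p(G)}+L_qh^{\lambda/2}\big)\] for all $h\in(0,1]$, where $\mathcal{T}_hq$ is restricted to real points $x\in G$.
   Context: $\mathcal{T}_hq(x)=\int_{\mathbf{R}^n}e^{-\frac{1}{2h}|x-y|^2}q(y)\,dy$ for $x\in\mathbf{R}^n$ (the Segal–Bargmann transform at real points). *)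

theory Defs
  imports "HOL-Analysis.Analysis"
begin

definition lp_int :: "real \<Rightarrow> ('a::euclidean_space \<Rightarrow> 'b::real_normed_vector) \<Rightarrow> 'a set \<Rightarrow> ennreal" where
  "lp_int p f G = (\<integral>\<^sup>+ x\<in>G. ennreal (norm (f x) powr p) \<partial>lebesgue)"

text \<open>L^p norm of f on G (meaningful when lp_int p f G is finite).\<close>
definition lp_norm :: "real \<Rightarrow> ('a::euclidean_space \<Rightarrow> 'b::real_normed_vector) \<Rightarrow> 'a set \<Rightarrow> real" where
  "lp_norm p f G = enn2real (lp_int p f G) powr (1 / p)"

definition SB_transform :: "real \<Rightarrow> (real^'n \<Rightarrow> complex) \<Rightarrow> real^'n \<Rightarrow> complex" where
  "SB_transform h q x = (\<integral> y. exp (- (norm (x - y))\<^sup>2 / (2 * h)) *\<^sub>R q y \<partial>lebesgue)"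

definition Lq_int :: "real \<Rightarrow> real \<Rightarrow> (real^'n \<Rightarrow> complex) \<Rightarrow> ennreal" where
  "Lq_int p lam q = (\<integral>\<^sup>+ y. ennreal (enn2real (lp_int p (\<lambda>x. q x - q (x - y)) UNIV)
        / norm y powr (real CARD('n) + lam * p)) \<partial>lebesgue)"

definition Lq :: "real \<Rightarrow> real \<Rightarrow> (real^'n \<Rightarrow> complex) \<Rightarrow> real" where
  "Lq p lam q = enn2real (Lq_int p lam q) powr (1 / p)"

end

theory Submission
  imports Defs
begin

text \<open>Let \<open>A\<close> be the total mass of the Gaussian \<open>exp(-|z|^2/(2h))\<close>, comparable to \<open>h^(n/2)\<close>.
  Then \<open>q(x) - T_h q(x)/A\<close> is an average of the differences \<open>q(x) - q(x-z)\<close> against the normalised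
  Gaussian. Splitting that Gaussian as the product of two Gaussians of width \<open>2h\<close> and applying
  Jensen's inequality with one of them as the probability weight bounds \<open>|q(x) - T_h q(x)/A|^p\<close> by
  an integral of \<open>|q(x) - q(x-z)|^p\<close> against \<open>exp(-(p+1)|z|^2/(4h))\<close>, and this weight is at most
  a constant times \<open>h^((n+\<lambda>p)/2) |z|^(-(n+\<lambda>p))\<close>. Integrating in \<open>x\<close> and exchanging the
  integrals (Tonelli) gives \<open>\<parallel>q - T_h q/A\<parallel>_p \<le> C L_q h^(\<lambda>/2)\<close>; the triangle inequality and
  \<open>1/A \<le> C h^(-n/2)\<close> finish the proof.\<close>

lemma powr_above_tangent:
  fixes t m p :: real assumes t: "0 \<le> t" and m: "0 < m" and p: "1 \<le> p"
  shows "m powr p + p * m powr (p-1) * (t - m) \<le> t powr p"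
proof (cases "t = 0")
  case True
  have "m powr p = m powr (p-1) * m" using m by (simp add: powr_diff)
  then have "m powr p + p * m powr (p-1) * (t - m) = (1 - p) * m powr p" using True by (simp add: algebra_simps)
  also have "\<dots> \<le> 0" using p by (simp add: mult_nonpos_nonneg)
  finally show ?thesis using True by simp
next
  case False
  then have t': "t > 0" using t by simp
  have "p * m powr (p-1) * (t - m) \<le> t powr p - m powr p"
    using p m t'
    by (intro convex_on_imp_above_tangent[where A = "{0<..}"] powr_convex)
       (auto intro!: derivative_eq_intros simp: interior_open)
  then show ?thesis by simp
qed

lemma powr_add_le_add_powr:
  fixes x y r :: real assumes x: "0 \<le> x" and y: "0 \<le> y" and r: "0 < r" "r \<le> 1"
  shows "(x + y) powr r \<le> x powr r + y powr r"
proof (cases "x + y = 0")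
  case True then show ?thesis using x y by simp
next
  case False
  then have s: "0 < x + y" using x y by simp
  have key: "u * (x + y) powr (r - 1) \<le> u powr r" if u: "0 \<le> u" "u \<le> x + y" for u
  proof (cases "u = 0")
    case True then show ?thesis by simp
  next
    case False
    then have u0: "0 < u" using u by simp
    have "(x + y) powr (r - 1) \<le> u powr (r - 1)"
      using u0 u r by (intro powr_mono2') auto
    then have "u * (x + y) powr (r - 1) \<le> u * u powr (r - 1)" using u0 by (intro mult_left_mono) auto
    also have "u * u powr (r - 1) = u powr r" using u0 by (simp add: powr_diff)
    finally show ?thesis .
  qed
  have "(x + y) * (x + y) powr (r - 1) = (x + y) powr r" using s by (simp add: powr_diff)
  then have "(x + y) powr r = x * (x + y) powr (r - 1) + y * (x + y) powr (r - 1)"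
    by (simp add: distrib_right)
  also have "\<dots> \<le> x powr r + y powr r"
    using key[of x] key[of y] x y by (intro add_mono) auto
  finally show ?thesis .
qed

lemma norm_diff_powr_le:
  fixes a b :: "'a::real_normed_vector" and p :: real assumes p: "0 < p"
  shows "norm (a - b) powr p \<le> 2 powr p * (norm a powr p + norm b powr p)"
proof -
  have "norm (a - b) \<le> norm a + norm b" by (rule norm_triangle_ineq4)
  moreover have "norm a \<le> max (norm a) (norm b)" "norm b \<le> max (norm a) (norm b)" by auto
  ultimately have "norm (a - b) \<le> 2 * max (norm a) (norm b)" by linarith
  then have "norm (a - b) powr p \<le> (2 * max (norm a) (norm b)) powr p"
    using p by (intro powr_mono2) auto
  also have "\<dots> = 2 powr p * max (norm a) (norm b) powr p" by (simp add: powr_mult)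
  also have "max (norm a) (norm b) powr p \<le> norm a powr p + norm b powr p"
    by (cases "norm a \<le> norm b") (auto simp: max_def)
  then have "2 powr p * max (norm a) (norm b) powr p \<le> 2 powr p * (norm a powr p + norm b powr p)"
    by (intro mult_left_mono) auto
  finally show ?thesis .
qed

lemma power2_powr_half: "0 \<le> (x::real) \<Longrightarrow> (x\<^sup>2) powr (s/2) = x powr s"
proof (cases "x = 0")
  case False
  assume "0 \<le> x"
  then have x: "0 < x" using False by simp
  have "x\<^sup>2 = x powr 2" using x by (simp add: powr_realpow)
  then have "x\<^sup>2 powr (s/2) = (x powr 2) powr (s/2)" by simp
  also have "\<dots> = x powr (2 * (s/2))" by (rule powr_powr)
  finally show ?thesis by simp
qed simp

lemma sqrt_power_eq_powr: "0 < (h::real) \<Longrightarrow> sqrt h ^ d = h powr (real d / 2)"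
proof -
  assume h: "0 < h"
  have "sqrt h ^ d = (h powr (1/2)) ^ d" using h by (simp add: powr_half_sqrt)
  also have "\<dots> = h powr (real d / 2)" using h by (simp add: powr_realpow[symmetric] powr_powr)
  finally show ?thesis .
qed

lemma mult_exp_neg_le:
  fixes u c :: real assumes "0 \<le> u" "0 < c" shows "u * exp (- (c * u)) \<le> 1 / c"
proof -
  have "c * u \<le> exp (c * u)" using exp_ge_add_one_self[of "c*u"] by linarith
  then have "c * u * exp (- (c * u)) \<le> 1" by (simp add: exp_minus field_simps)
  then show ?thesis using assms by (simp add: field_simps mult.assoc)
qed

lemma powr_mult_exp_neg_le:
  fixes u a b :: real assumes u: "0 \<le> u" and a: "0 < a" and b: "0 < b"
  shows "u powr a * exp (- (b * u)) \<le> (a / b) powr a"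
proof -
  have "exp (- (b * u)) = exp (- ((b/a) * u)) powr a"
    using a by (simp add: powr_def)
  then have "u powr a * exp (- (b * u)) = (u * exp (- ((b/a) * u))) powr a"
    using u by (simp add: powr_mult)
  also have "\<dots> \<le> (1 / (b/a)) powr a"
    using u a b by (intro powr_mono2 mult_exp_neg_le) auto
  finally show ?thesis by simp
qed

lemma exp_neg_square_mult_powr_le:
  fixes r h c s :: real
  assumes r: "0 \<le> r" and h: "0 < h" and c: "0 < c" and s: "0 < s"
  shows "exp (- (c * (r\<^sup>2 / h))) * r powr s \<le> (s / (2*c)) powr (s/2) * h powr (s/2)"
proof -
  have u: "0 \<le> r\<^sup>2 / h" using h by simp
  have "r powr s = (r\<^sup>2) powr (s/2)" using r by (simp add: power2_powr_half)
  also have "r\<^sup>2 = r\<^sup>2 / h * h" using h by simp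
  also have "(r\<^sup>2 / h * h) powr (s/2) = (r\<^sup>2 / h) powr (s/2) * h powr (s/2)"
    using u h by (intro powr_mult)
  finally have "exp (- (c * (r\<^sup>2 / h))) * r powr s
      = ((r\<^sup>2 / h) powr (s/2) * exp (- (c * (r\<^sup>2 / h)))) * h powr (s/2)"
    by (simp add: mult_ac)
  also have "\<dots> \<le> ((s/2) / c) powr (s/2) * h powr (s/2)"
    using u s c by (intro mult_right_mono powr_mult_exp_neg_le) auto
  finally show ?thesis by simp
qed

lemma gaussian_weight_constant_le:
  fixes n p lam :: real
  assumes n: "1 \<le> n" and p: "1 \<le> p" and lam: "0 < lam" "lam \<le> 1"
  shows "((n + lam*p) / (2 * ((p+1)/4))) powr ((n + lam*p)/2) \<le> (2*(n+1)) powr ((n+1)*p/2)"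
proof -
  define s where "s = n + lam*p"
  have s0: "0 < s" and lp: "lam * p \<le> p" using n p lam by (simp_all add: s_def add_pos_nonneg)
  have "(n+1)*(p+1) = n*p + n + p + 1" by (simp add: algebra_simps)
  moreover have "0 \<le> n*p" using n p by simp
  ultimately have "s \<le> (n+1)*(p+1)" using lp by (simp add: s_def)
  then have "s / (2 * ((p+1)/4)) \<le> 2*(n+1)" using p by (simp add: field_simps)
  then have "(s / (2 * ((p+1)/4))) powr (s/2) \<le> (2*(n+1)) powr (s/2)"
    using s0 p by (intro powr_mono2) auto
  also have "\<dots> \<le> (2*(n+1)) powr ((n+1)*p/2)"
  proof (intro powr_mono)
    have "(n+1)*p = n*p + p" by (simp add: algebra_simps)
    moreover have "n \<le> n*p" using n p by simp
    ultimately show "s/2 \<le> (n+1)*p/2" using lp by (simp add: s_def)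
  qed (use n in auto)
  finally show ?thesis unfolding s_def .
qed

lemma nn_integral_normalize_eq_1:
  fixes f :: "'a \<Rightarrow> real"
  assumes [measurable]: "f \<in> borel_measurable M" and f0: "\<And>x. 0 \<le> f x"
    and I: "(\<integral>\<^sup>+ x. ennreal (f x) \<partial>M) = ennreal A" and A: "0 < A"
  shows "(\<integral>\<^sup>+ x. ennreal (f x / A) \<partial>M) = 1"
proof -
  have "(\<integral>\<^sup>+ x. ennreal (f x / A) \<partial>M) = (\<integral>\<^sup>+ x. ennreal (f x) * ennreal (1/A) \<partial>M)"
    using A f0 by (intro nn_integral_cong) (simp add: ennreal_mult''[symmetric])
  also have "\<dots> = ennreal A * ennreal (1/A)" by (subst nn_integral_multc) (simp_all add: I)
  also have "\<dots> = 1" using A by (simp add: ennreal_mult''[symmetric])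
  finally show ?thesis .
qed

lemma nn_integral_jensen_powr:
  fixes \<phi> F :: "'a \<Rightarrow> real" and p a :: real
  assumes \<phi>m[measurable]: "\<phi> \<in> borel_measurable M" and Fm[measurable]: "F \<in> borel_measurable M"
    and \<phi>0: "\<And>x. 0 \<le> \<phi> x" and F0: "\<And>x. 0 \<le> F x" and \<phi>1: "(\<integral>\<^sup>+ x. ennreal (\<phi> x) \<partial>M) = 1"
    and p: "1 \<le> p" and a0: "0 \<le> a" and a: "ennreal a \<le> (\<integral>\<^sup>+ x. ennreal (\<phi> x * F x) \<partial>M)"
  shows "ennreal (a powr p) \<le> (\<integral>\<^sup>+ x. ennreal (\<phi> x * F x powr p) \<partial>M)"
proof (cases "a = 0")
  case True then show ?thesis by simp
next
  case False
  then have apos: "0 < a" using a0 by simp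
  have a_pow: "a powr (p-1) * a = a powr p" using apos by (simp add: powr_diff)
  \<comment> \<open>tangent line of \<open>t powr p\<close> at \<open>a\<close>, rearranged so that no subtraction occurs in \<open>ennreal\<close>\<close>
  have tangent: "a powr p + p * a powr (p-1) * F x \<le> F x powr p + p * a powr p" for x
    using powr_above_tangent[OF F0 apos p, of x] by (simp add: a_pow[symmetric] algebra_simps)
  have "ennreal (a powr p) + ennreal (p * a powr p) = ennreal (a powr p) + ennreal (p * a powr (p-1)) * ennreal a"
    using apos p a_pow by (simp add: ennreal_mult'[symmetric] mult.assoc)
  also have "\<dots> \<le> ennreal (a powr p) + ennreal (p * a powr (p-1)) * (\<integral>\<^sup>+ x. ennreal (\<phi> x * F x) \<partial>M)"
    using a by (intro add_left_mono mult_left_mono) auto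
  also have "\<dots> = (\<integral>\<^sup>+ x. ennreal (a powr p) * ennreal (\<phi> x) + ennreal (p * a powr (p-1)) * ennreal (\<phi> x * F x) \<partial>M)"
    by (simp add: nn_integral_add nn_integral_cmult \<phi>1)
  also have "\<dots> \<le> (\<integral>\<^sup>+ x. ennreal (\<phi> x * F x powr p) + ennreal (p * a powr p) * ennreal (\<phi> x) \<partial>M)"
  proof (intro nn_integral_mono)
    fix x
    have "\<phi> x * (a powr p + p * a powr (p-1) * F x) \<le> \<phi> x * (F x powr p + p * a powr p)"
      using tangent \<phi>0 by (rule mult_left_mono)
    then show "ennreal (a powr p) * ennreal (\<phi> x) + ennreal (p * a powr (p-1)) * ennreal (\<phi> x * F x)
        \<le> ennreal (\<phi> x * F x powr p) + ennreal (p * a powr p) * ennreal (\<phi> x)"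
      using \<phi>0[of x] F0[of x] p
      by (simp add: ennreal_plus[symmetric] ennreal_mult'[symmetric] ennreal_leI algebra_simps del: ennreal_plus)
  qed
  also have "\<dots> = ennreal (p * a powr p) + (\<integral>\<^sup>+ x. ennreal (\<phi> x * F x powr p) \<partial>M)"
    by (simp add: nn_integral_add nn_integral_cmult \<phi>1 add.commute)
  finally show ?thesis
    by (simp add: add.commute ennreal_add_left_cancel_le)
qed

lemma norm_diff_integral_le:
  fixes g :: "'a \<Rightarrow> real" and f :: "'a \<Rightarrow> 'b::{banach, second_countable_topology}"
  assumes [measurable]: "g \<in> borel_measurable M" "f \<in> borel_measurable M"
    and g0: "\<And>z. 0 \<le> g z" and g: "integrable M g" and g1: "(\<integral> z. g z \<partial>M) = 1"
  shows "ennreal (norm (c - (\<integral> z. g z *\<^sub>R f z \<partial>M))) \<le> (\<integral>\<^sup>+ z. ennreal (g z * norm (c - f z)) \<partial>M)"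
proof (cases "(\<integral>\<^sup>+ z. ennreal (g z * norm (c - f z)) \<partial>M) = \<infinity>")
  case False
  have norm: "norm (g z *\<^sub>R (c - f z)) = g z * norm (c - f z)" for z
    using g0[of z] by simp
  have diff: "integrable M (\<lambda>z. g z *\<^sub>R (c - f z))"
    using False unfolding integrable_iff_bounded norm by (simp add: top.not_eq_extremum)
  have const: "integrable M (\<lambda>z. g z *\<^sub>R c)" using g by simp
  have "integrable M (\<lambda>z. g z *\<^sub>R c - g z *\<^sub>R (c - f z))"
    using const diff by (rule Bochner_Integration.integrable_diff)
  then have "integrable M (\<lambda>z. g z *\<^sub>R f z)" by (simp add: scaleR_diff_right)
  then have "c - (\<integral> z. g z *\<^sub>R f z \<partial>M) = (\<integral> z. g z *\<^sub>R (c - f z) \<partial>M)"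
    using const g g1 by (simp add: scaleR_diff_right)
  also have "norm \<dots> \<le> (\<integral>\<^sup>+ z. norm (g z *\<^sub>R (c - f z)) \<partial>M)"
    using diff by (rule integral_norm_bound_ennreal)
  finally show ?thesis by (simp only: norm)
qed simp

definition gaussian_series :: "nat \<Rightarrow> real" where
  "gaussian_series d = (\<Sum>k. exp (- (real k)\<^sup>2 / 2) * (real k + 1) ^ d)"

lemma summable_gaussian_series:
  "summable (\<lambda>k::nat. exp (- (real k)\<^sup>2 / 2) * (real k + 1) ^ d)"
proof (rule summable_ratio_test[where c = "1/2" and N = "2 ^ (d+1)"])
  fix k :: nat assume k: "2 ^ (d+1) \<le> k"
  have e: "exp (- (real (Suc k))\<^sup>2 / 2) = exp (- (real k)\<^sup>2 / 2) * exp (- (real k + 1/2))"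
    by (simp add: exp_add[symmetric] power2_eq_square field_simps)
  have r: "(real (Suc k) + 1) ^ d \<le> 2 ^ d * (real k + 1) ^ d"
    by (simp add: power_mult_distrib[symmetric] power_mono)
  have "(2::real) ^ (d+1) \<le> real k" using k by (metis of_nat_le_iff of_nat_numeral of_nat_power)
  also have "real k \<le> exp (real k + 1/2)" using exp_ge_add_one_self[of "real k + 1/2"] by linarith
  finally have "2 ^ d * exp (- (real k + 1/2)) \<le> 1/2"
    by (simp add: exp_minus field_simps)
  then have "(2 ^ d * exp (- (real k + 1/2))) * (real k + 1) ^ d \<le> 1/2 * (real k + 1) ^ d"
    by (intro mult_right_mono) auto
  then have "exp (- (real k + 1/2)) * (2 ^ d * (real k + 1) ^ d) \<le> 1/2 * (real k + 1) ^ d"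
    by (simp add: mult_ac)
  moreover have "exp (- (real k + 1/2)) * (real (Suc k) + 1) ^ d \<le> exp (- (real k + 1/2)) * (2 ^ d * (real k + 1) ^ d)"
    using r by (intro mult_left_mono) auto
  ultimately have "exp (- (real k + 1/2)) * (real (Suc k) + 1) ^ d \<le> 1/2 * (real k + 1) ^ d"
    by linarith
  then show "norm (exp (- (real (Suc k))\<^sup>2 / 2) * (real (Suc k) + 1) ^ d)
         \<le> 1/2 * norm (exp (- (real k)\<^sup>2 / 2) * (real k + 1) ^ d)"
    unfolding e by (simp add: abs_mult mult_left_mono algebra_simps)
qed simp

lemma gaussian_le_suminf_balls:
  fixes z :: "'a::real_normed_vector" and h :: real
  assumes h: "0 < h"
  shows "ennreal (exp (- (norm z)\<^sup>2 / (2*h)))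
     \<le> (\<Sum>k. ennreal (exp (- (real k)\<^sup>2 / 2)) * indicator (ball 0 ((real k + 1) * sqrt h)) z)"
proof -
  define k0 where "k0 = nat \<lfloor>norm z / sqrt h\<rfloor>"
  have sh: "sqrt h > 0" using h by simp
  have k0le: "real k0 \<le> norm z / sqrt h"
    unfolding k0_def using sh by (simp add: of_nat_nat)
  have "norm z / sqrt h < real k0 + 1"
    unfolding k0_def using sh floor_correct[of "norm z / sqrt h"] by (simp add: of_nat_nat)
  then have ball: "z \<in> ball 0 ((real k0 + 1) * sqrt h)" using sh by (simp add: field_simps)
  have "(real k0)\<^sup>2 \<le> (norm z / sqrt h)\<^sup>2" using k0le by (intro power_mono) auto
  then have "- (norm z)\<^sup>2 / (2*h) \<le> - (real k0)\<^sup>2 / 2" using h by (simp add: power_divide field_simps)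
  then have "ennreal (exp (- (norm z)\<^sup>2 / (2*h)))
      \<le> ennreal (exp (- (real k0)\<^sup>2 / 2)) * indicator (ball 0 ((real k0 + 1) * sqrt h)) z"
    using ball by (simp add: ennreal_leI)
  also have "\<dots> \<le> (\<Sum>k. ennreal (exp (- (real k)\<^sup>2 / 2)) * indicator (ball 0 ((real k + 1) * sqrt h)) z)"
    (is "?f k0 \<le> suminf ?f")
    using ennreal_suminf_lessD[of ?f "?f k0" k0] not_le by blast
  finally show ?thesis .
qed

lemma gaussian_mass_lower:
  fixes h :: real assumes h: "0 < h"
  shows "ennreal (exp (-1/2) * unit_ball_vol DIM('a) * sqrt h ^ DIM('a))
     \<le> (\<integral>\<^sup>+ (z::'a::euclidean_space). ennreal (exp (- (norm z)\<^sup>2 / (2*h))) \<partial>lborel)"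
proof -
  have "ennreal (exp (-1/2) * unit_ball_vol DIM('a) * sqrt h ^ DIM('a))
      = (\<integral>\<^sup>+ (z::'a). ennreal (exp (-1/2)) * indicator (ball 0 (sqrt h)) z \<partial>lborel)"
    using h by (simp add: nn_integral_cmult_indicator emeasure_ball ennreal_mult' mult.assoc)
  also have "\<dots> \<le> (\<integral>\<^sup>+ (z::'a). ennreal (exp (- (norm z)\<^sup>2 / (2*h))) \<partial>lborel)"
  proof (intro nn_integral_mono)
    fix z :: 'a
    show "ennreal (exp (-1/2)) * indicator (ball 0 (sqrt h)) z \<le> ennreal (exp (- (norm z)\<^sup>2 / (2*h)))"
    proof (cases "z \<in> ball 0 (sqrt h)")
      case True
      then have "norm z < sqrt h" by simp
      then have "(norm z)\<^sup>2 < (sqrt h)\<^sup>2" by (intro power_strict_mono) auto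
      then have "(norm z)\<^sup>2 < h" using h by simp
      then have "-1/2 \<le> - (norm z)\<^sup>2 / (2*h)" using h by (simp add: field_simps)
      then show ?thesis using True by (simp add: ennreal_leI)
    qed simp
  qed
  finally show ?thesis .
qed

lemma gaussian_mass_upper:
  fixes h :: real assumes h: "0 < h"
  shows "(\<integral>\<^sup>+ (z::'a::euclidean_space). ennreal (exp (- (norm z)\<^sup>2 / (2*h))) \<partial>lborel)
     \<le> ennreal (gaussian_series DIM('a) * unit_ball_vol DIM('a) * sqrt h ^ DIM('a))"
proof -
  define c where "c = unit_ball_vol DIM('a) * sqrt h ^ DIM('a)"
  have "(\<integral>\<^sup>+ (z::'a). ennreal (exp (- (norm z)\<^sup>2 / (2*h))) \<partial>lborel)
      \<le> (\<integral>\<^sup>+ z. (\<Sum>k. ennreal (exp (- (real k)\<^sup>2 / 2)) * indicator (ball (0::'a) ((real k + 1) * sqrt h)) z) \<partial>lborel)"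
    using h by (intro nn_integral_mono gaussian_le_suminf_balls)
  also have "\<dots> = (\<Sum>k. \<integral>\<^sup>+ z. ennreal (exp (- (real k)\<^sup>2 / 2)) * indicator (ball (0::'a) ((real k + 1) * sqrt h)) z \<partial>lborel)"
    by (intro nn_integral_suminf borel_measurable_times_ennreal borel_measurable_const
        borel_measurable_indicator) (simp add: borel_open)
  also have "\<dots> = (\<Sum>k. ennreal (exp (- (real k)\<^sup>2 / 2) * (real k + 1) ^ DIM('a) * c))"
    by (intro suminf_cong, subst nn_integral_cmult_indicator)
       (use h in \<open>auto simp: c_def emeasure_ball ennreal_mult'[symmetric] power_mult_distrib mult_ac\<close>)
  also have "\<dots> = ennreal (gaussian_series DIM('a) * c)"
    unfolding gaussian_series_def using summable_gaussian_series[of "DIM('a)"] h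
    by (subst suminf_ennreal2) (auto simp: c_def suminf_mult2 intro!: summable_mult2)
  finally show ?thesis by (simp add: c_def mult.assoc)
qed

definition gaussian_mass_lower_const :: "nat \<Rightarrow> real" where
  "gaussian_mass_lower_const d = exp (-1/2) * unit_ball_vol (real d)"

definition gaussian_mass_upper_const :: "nat \<Rightarrow> real" where
  "gaussian_mass_upper_const d = gaussian_series d * unit_ball_vol (real d)"

lemma gaussian_mass_lower_const_pos: "0 < gaussian_mass_lower_const d"
  unfolding gaussian_mass_lower_const_def by simp

lemma gaussian_mass_upper_const_pos: "0 < gaussian_mass_upper_const d"
proof -
  have "0 < gaussian_series d"
    unfolding gaussian_series_def by (rule suminf_pos[OF summable_gaussian_series]) simp
  then show ?thesis unfolding gaussian_mass_upper_const_def by simp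
qed

lemma gaussian_mass_bounds:
  assumes t: "0 < t"
  obtains A where "(\<integral>\<^sup>+ (z::'a::euclidean_space). ennreal (exp (- (norm z)\<^sup>2/(2*t))) \<partial>lborel) = ennreal A"
    and "gaussian_mass_lower_const DIM('a) * t powr (DIM('a)/2) \<le> A"
    and "A \<le> gaussian_mass_upper_const DIM('a) * t powr (DIM('a)/2)"
proof -
  let ?I = "\<integral>\<^sup>+ (z::'a). ennreal (exp (- (norm z)\<^sup>2/(2*t))) \<partial>lborel"
  have lo: "ennreal (gaussian_mass_lower_const DIM('a) * t powr (DIM('a)/2)) \<le> ?I"
    using gaussian_mass_lower[OF t, where 'a='a] t
    by (simp add: gaussian_mass_lower_const_def sqrt_power_eq_powr mult.assoc)
  have up: "?I \<le> ennreal (gaussian_mass_upper_const DIM('a) * t powr (DIM('a)/2))"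
    using gaussian_mass_upper[OF t, where 'a='a] t
    by (simp add: gaussian_mass_upper_const_def sqrt_power_eq_powr mult.assoc)
  obtain A where A: "?I = ennreal A" "0 \<le> A"
    using up by (cases ?I rule: ennreal_cases) (auto simp: top_unique)
  show ?thesis
  proof
    show "?I = ennreal A" by (rule A(1))
    show "gaussian_mass_lower_const DIM('a) * t powr (DIM('a)/2) \<le> A"
      using lo A by (simp add: ennreal_le_iff)
    show "A \<le> gaussian_mass_upper_const DIM('a) * t powr (DIM('a)/2)"
      using up A gaussian_mass_upper_const_pos[of "DIM('a)"] t by (simp add: ennreal_le_iff)
  qed
qed

lemma lborel_distr_reflect: "distr lborel borel (\<lambda>z. x - z) = (lborel :: 'a::euclidean_space measure)"
proof -
  have "(lborel :: 'a measure) = density (distr lborel borel (\<lambda>z. x + (-1) *\<^sub>R z)) (\<lambda>_. \<bar>-1::real\<bar> ^ DIM('a))"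
    by (rule lborel_affine) simp
  then show ?thesis by (simp add: density_1)
qed

lemma lborel_distr_translate: "distr lborel borel (\<lambda>z. z - y) = (lborel :: 'a::euclidean_space measure)"
proof -
  have "(\<lambda>z. z - y) = (+) (-y)" by (rule ext) simp
  then show ?thesis using lborel_distr_plus[of "-y"] by simp
qed

lemma nn_integral_lborel_translate:
  fixes f :: "'a::euclidean_space \<Rightarrow> ennreal"
  assumes f: "f \<in> borel_measurable borel"
  shows "(\<integral>\<^sup>+ x. f (x - y) \<partial>lborel) = (\<integral>\<^sup>+ x. f x \<partial>lborel)"
proof -
  have "(\<integral>\<^sup>+ x. f x \<partial>lborel) = (\<integral>\<^sup>+ x. f x \<partial>distr lborel borel (\<lambda>z. z - y))"
    by (simp add: lborel_distr_translate)
  also have "\<dots> = (\<integral>\<^sup>+ x. f (x - y) \<partial>lborel)"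
    using f by (intro nn_integral_distr) auto
  finally show ?thesis by simp
qed

lemma AE_lborel_translate:
  fixes y :: "'a::euclidean_space"
  assumes "AE x in lborel. P x"
  shows "AE x in lborel. P (x - y)"
proof -
  from assms obtain N where N: "{x \<in> space lborel. \<not> P x} \<subseteq> N" "emeasure lborel N = 0" "N \<in> sets lborel"
    by (auto elim: AE_E)
  have Nb: "N \<in> sets borel" using N(3) by simp
  have "emeasure lborel ((\<lambda>x. x - y) -` N \<inter> space lborel) = emeasure (distr lborel borel (\<lambda>x. x - y)) N"
    using Nb by (subst emeasure_distr) auto
  also have "\<dots> = 0" using N(2) by (simp add: lborel_distr_translate)
  finally have e0: "emeasure lborel ((\<lambda>x. x - y) -` N \<inter> space lborel) = 0" .
  have mm: "(\<lambda>x::'a. x - y) \<in> borel_measurable borel" by measurable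
  have "(\<lambda>x. x - y) -` N \<in> sets borel" using measurable_sets[OF mm Nb] by simp
  with e0 have null: "(\<lambda>x. x - y) -` N \<inter> space lborel \<in> null_sets lborel"
    by (auto simp: null_sets_def)
  show ?thesis
    by (rule AE_I'[OF null]) (use N(1) in auto)
qed

lemma lebesgue_measurable_AE_borel:
  fixes q :: "'a::euclidean_space \<Rightarrow> complex"
  assumes qm[measurable]: "q \<in> borel_measurable lebesgue"
  obtains q' where "q' \<in> borel_measurable borel" "AE x in lborel. q x = q' x"
proof -
  have "(\<lambda>x. Re (q x)) \<in> borel_measurable (completion lborel)" by measurable
  from completion_ex_borel_measurable_real[OF this]
  obtain r where r: "r \<in> borel_measurable lborel" "AE x in lborel. Re (q x) = r x" by blast
  have "(\<lambda>x. Im (q x)) \<in> borel_measurable (completion lborel)" by measurable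
  from completion_ex_borel_measurable_real[OF this]
  obtain i where i: "i \<in> borel_measurable lborel" "AE x in lborel. Im (q x) = i x" by blast
  have [measurable]: "r \<in> borel_measurable borel" "i \<in> borel_measurable borel" using r i by auto
  show ?thesis
  proof
    show "(\<lambda>x. complex_of_real (r x) + \<i> * complex_of_real (i x)) \<in> borel_measurable borel" by measurable
    show "AE x in lborel. q x = complex_of_real (r x) + \<i> * complex_of_real (i x)"
      using r(2) i(2) by eventually_elim (simp add: complex_eq_iff)
  qed
qed

lemma lp_int_UNIV: "lp_int p f UNIV = (\<integral>\<^sup>+ x. ennreal (norm (f x) powr p) \<partial>lborel)"
  unfolding lp_int_def by (simp add: nn_integral_completion)

lemma lp_int_lborel: "lp_int p f G = (\<integral>\<^sup>+ x. ennreal (norm (f x) powr p) * indicator G x \<partial>lborel)"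
  unfolding lp_int_def by (rule nn_integral_completion)

lemma lp_int_add_le:
  fixes f g :: "'a::euclidean_space \<Rightarrow> complex"
  assumes [measurable]: "f \<in> borel_measurable borel" "g \<in> borel_measurable borel" "G \<in> sets borel" and p: "0 < p"
  shows "lp_int p (\<lambda>x. f x + g x) G \<le> ennreal (2 powr p) * (lp_int p f G + lp_int p g G)"
proof -
  have "lp_int p (\<lambda>x. f x + g x) G \<le> (\<integral>\<^sup>+ x. ennreal (2 powr p) * (ennreal (norm (f x) powr p) * indicator G x + ennreal (norm (g x) powr p) * indicator G x) \<partial>lborel)"
    unfolding lp_int_lborel
  proof (intro nn_integral_mono)
    fix x
    have "norm (f x + g x) powr p \<le> 2 powr p * (norm (f x) powr p + norm (g x) powr p)"
      using norm_diff_powr_le[OF p, of "f x" "- g x"] by simp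
    then show "ennreal (norm (f x + g x) powr p) * indicator G x \<le> ennreal (2 powr p) * (ennreal (norm (f x) powr p) * indicator G x + ennreal (norm (g x) powr p) * indicator G x)"
      by (cases "x \<in> G") (simp_all add: ennreal_plus[symmetric] ennreal_mult'[symmetric] ennreal_leI del: ennreal_plus)
  qed
  also have "\<dots> = ennreal (2 powr p) * (lp_int p f G + lp_int p g G)"
    unfolding lp_int_lborel by (subst nn_integral_cmult) (auto simp: nn_integral_add)
  finally show ?thesis .
qed

lemma lp_int_scaleR:
  fixes f :: "'a::euclidean_space \<Rightarrow> complex"
  assumes [measurable]: "f \<in> borel_measurable borel" "G \<in> sets borel" and c: "0 \<le> c"
  shows "lp_int p (\<lambda>x. c *\<^sub>R f x) G = ennreal (c powr p) * lp_int p f G"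
proof -
  have "lp_int p (\<lambda>x. c *\<^sub>R f x) G = (\<integral>\<^sup>+ x. ennreal (c powr p) * (ennreal (norm (f x) powr p) * indicator G x) \<partial>lborel)"
    unfolding lp_int_lborel
  proof (intro nn_integral_cong)
    fix x
    have "norm (c *\<^sub>R f x) powr p = c powr p * norm (f x) powr p" using c by (simp add: powr_mult)
    then show "ennreal (norm (c *\<^sub>R f x) powr p) * indicator G x = ennreal (c powr p) * (ennreal (norm (f x) powr p) * indicator G x)"
      by (simp add: ennreal_mult' mult.assoc)
  qed
  also have "\<dots> = ennreal (c powr p) * lp_int p f G"
    unfolding lp_int_lborel by (rule nn_integral_cmult) measurable
  finally show ?thesis .
qed

lemma lp_int_le_UNIV: "lp_int p f G \<le> lp_int p f UNIV"
  unfolding lp_int_def by (intro nn_integral_mono) (auto split: split_indicator)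

lemma lp_int_translate_diff_finite:
  fixes q :: "'a::euclidean_space \<Rightarrow> complex"
  assumes q[measurable]: "q \<in> borel_measurable borel" and p: "0 < p" and fin: "lp_int p q UNIV < \<infinity>"
  shows "(\<integral>\<^sup>+ x. ennreal (norm (q x - q (x - z)) powr p) \<partial>lborel) < \<infinity>"
proof -
  have I: "(\<integral>\<^sup>+ x. ennreal (norm (q x) powr p) \<partial>lborel) < \<infinity>" using fin by (simp add: lp_int_UNIV)
  have I2: "(\<integral>\<^sup>+ x. ennreal (norm (q (x - z)) powr p) \<partial>lborel) = (\<integral>\<^sup>+ x. ennreal (norm (q x) powr p) \<partial>lborel)"
    by (rule nn_integral_lborel_translate[where f="\<lambda>x. ennreal (norm (q x) powr p)"]) measurable
  have "(\<integral>\<^sup>+ x. ennreal (norm (q x - q (x - z)) powr p) \<partial>lborel)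
      \<le> (\<integral>\<^sup>+ x. ennreal (2 powr p) * (ennreal (norm (q x) powr p) + ennreal (norm (q (x - z)) powr p)) \<partial>lborel)"
    using norm_diff_powr_le[OF p]
    by (intro nn_integral_mono) (simp add: ennreal_plus[symmetric] ennreal_mult'[symmetric] ennreal_leI del: ennreal_plus)
  also have "\<dots> = ennreal (2 powr p) * ((\<integral>\<^sup>+ x. ennreal (norm (q x) powr p) \<partial>lborel) + (\<integral>\<^sup>+ x. ennreal (norm (q (x - z)) powr p) \<partial>lborel))"
    by (subst nn_integral_cmult) (auto simp: nn_integral_add)
  also have "\<dots> < \<infinity>" using I unfolding I2 by (simp add: ennreal_mult_less_top)
  finally show ?thesis .
qed

lemma lp_int_cong_AE:
  fixes q q' :: "'a::euclidean_space \<Rightarrow> 'b::real_normed_vector"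
  assumes ae: "AE x in lborel. q x = q' x"
  shows "lp_int p q G = lp_int p q' G"
  unfolding lp_int_def nn_integral_completion
  by (intro nn_integral_cong_AE) (use ae in eventually_elim, simp)

lemma lp_norm_le_of_lp_int_le:
  assumes f: "lp_int p f G \<le> ennreal (c powr p) * I" and I: "I < \<infinity>" and c: "0 \<le> c" and p: "0 < p"
  shows "lp_norm p f G \<le> c * enn2real I powr (1/p)"
proof -
  obtain x where x: "lp_int p f G = ennreal x" "0 \<le> x"
    using f I by (cases "lp_int p f G" rule: ennreal_cases)
                 (auto simp: ennreal_mult_less_top top_unique ennreal_mult_eq_top_iff)
  have "x \<le> c powr p * enn2real I"
    using f x I by (cases I rule: ennreal_cases) (auto simp: ennreal_mult'[symmetric] ennreal_le_iff)
  then have "x powr (1/p) \<le> (c powr p * enn2real I) powr (1/p)"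
    using x p by (intro powr_mono2) auto
  also have "\<dots> = c * enn2real I powr (1/p)"
    using c p by (simp add: powr_mult powr_powr)
  finally show ?thesis unfolding lp_norm_def x(1) using x(2) by simp
qed

lemma lp_norm_add_le:
  fixes f g :: "'a::euclidean_space \<Rightarrow> complex"
  assumes [measurable]: "f \<in> borel_measurable borel" "g \<in> borel_measurable borel" "G \<in> sets borel"
    and p: "1 \<le> p" and f: "lp_int p f G < \<infinity>" and g: "lp_int p g G < \<infinity>"
  shows "lp_norm p (\<lambda>x. f x + g x) G \<le> 2 * (lp_norm p f G + lp_norm p g G)"
proof -
  obtain a where a: "lp_int p f G = ennreal a" "0 \<le> a"
    using f by (cases "lp_int p f G" rule: ennreal_cases) auto
  obtain b where b: "lp_int p g G = ennreal b" "0 \<le> b"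
    using g by (cases "lp_int p g G" rule: ennreal_cases) auto
  have "lp_int p (\<lambda>x. f x + g x) G \<le> ennreal (2 powr p) * ennreal (a + b)"
    using lp_int_add_le[of f g G p] p a b by simp
  from lp_norm_le_of_lp_int_le[OF this] p a b
  have "lp_norm p (\<lambda>x. f x + g x) G \<le> 2 * (a + b) powr (1/p)"
    by (simp add: ennreal_plus[symmetric] del: ennreal_plus)
  also have "\<dots> \<le> 2 * (a powr (1/p) + b powr (1/p))"
    using a b p by (intro mult_left_mono powr_add_le_add_powr) auto
  finally show ?thesis unfolding lp_norm_def a b using a b by simp
qed

lemma lp_norm_scaleR:
  fixes f :: "'a::euclidean_space \<Rightarrow> complex"
  assumes [measurable]: "f \<in> borel_measurable borel" "G \<in> sets borel" and c: "0 \<le> c" and p: "0 < p"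
  shows "lp_norm p (\<lambda>x. c *\<^sub>R f x) G = c * lp_norm p f G"
  unfolding lp_norm_def lp_int_scaleR[OF assms(1,2) c]
  using c p by (simp add: enn2real_mult powr_mult powr_powr)

lemma SB_transform_lborel:
  fixes q :: "real^'n \<Rightarrow> complex"
  assumes q[measurable]: "q \<in> borel_measurable borel"
  shows "SB_transform h q x = (\<integral> z. exp (- (norm z)\<^sup>2 / (2*h)) *\<^sub>R q (x - z) \<partial>lborel)"
proof -
  have "SB_transform h q x = (\<integral> y. exp (- (norm (x - y))\<^sup>2 / (2 * h)) *\<^sub>R q y \<partial>lborel)"
    unfolding SB_transform_def by (intro integral_completion) measurable
  also have "\<dots> = (\<integral> y. exp (- (norm (x - y))\<^sup>2 / (2 * h)) *\<^sub>R q y \<partial>distr lborel borel (\<lambda>z. x - z))"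
    by (simp add: lborel_distr_reflect)
  also have "\<dots> = (\<integral> z. exp (- (norm z)\<^sup>2 / (2*h)) *\<^sub>R q (x - z) \<partial>lborel)"
    by (subst integral_distr) auto
  finally show ?thesis .
qed

lemma borel_measurable_SB_transform:
  fixes q :: "real^'n \<Rightarrow> complex"
  assumes q[measurable]: "q \<in> borel_measurable borel"
  shows "SB_transform h q \<in> borel_measurable borel"
proof -
  have "(\<lambda>x. \<integral> z. exp (- (norm z)\<^sup>2 / (2*h)) *\<^sub>R q (x - z) \<partial>lborel) \<in> borel_measurable borel"
    by measurable
  then show ?thesis by (simp add: SB_transform_lborel[OF q, abs_def])
qed

lemma SB_transform_cong_AE:
  fixes q q' :: "real^'n \<Rightarrow> complex"
  assumes qm[measurable]: "q \<in> borel_measurable lebesgue" and q'[measurable]: "q' \<in> borel_measurable borel"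
    and ae: "AE x in lborel. q x = q' x"
  shows "SB_transform h q = SB_transform h q'"
proof
  fix x
  have q'l[measurable]: "q' \<in> borel_measurable lebesgue"
    using measurable_completion[of q' lborel borel] q' by simp
  show "SB_transform h q x = SB_transform h q' x"
    unfolding SB_transform_def
  proof (rule integral_cong_AE)
    have e: "(\<lambda>y. exp (- (norm (x - y))\<^sup>2 / (2 * h))) \<in> borel_measurable lebesgue"
      by (intro measurable_completion) measurable
    show "(\<lambda>y. exp (- (norm (x - y))\<^sup>2 / (2 * h)) *\<^sub>R q y) \<in> borel_measurable lebesgue"
      by (intro borel_measurable_scaleR e qm)
    show "(\<lambda>y. exp (- (norm (x - y))\<^sup>2 / (2 * h)) *\<^sub>R q' y) \<in> borel_measurable lebesgue"
      by (intro borel_measurable_scaleR e q'l)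
    show "AE y in lebesgue. exp (- (norm (x - y))\<^sup>2 / (2 * h)) *\<^sub>R q y = exp (- (norm (x - y))\<^sup>2 / (2 * h)) *\<^sub>R q' y"
      by (rule AE_completion) (use ae in eventually_elim, simp)
  qed
qed

lemma Lq_int_cong_AE:
  fixes q q' :: "real^'n \<Rightarrow> complex"
  assumes ae: "AE x in lborel. q x = q' x"
  shows "Lq_int p lam q = Lq_int p lam q'"
  unfolding Lq_int_def
proof (intro nn_integral_cong)
  fix y :: "real^'n"
  have ae1: "AE x in lborel. q (x - y) = q' (x - y)" by (rule AE_lborel_translate[OF ae])
  have ae2: "AE x in lborel. q x - q (x - y) = q' x - q' (x - y)" using ae ae1 by eventually_elim simp
  have "lp_int p (\<lambda>x. q x - q (x - y)) UNIV = lp_int p (\<lambda>x. q' x - q' (x - y)) UNIV"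
    unfolding lp_int_UNIV by (intro nn_integral_cong_AE) (use ae2 in \<open>eventually_elim, simp\<close>)
  then show "ennreal (enn2real (lp_int p (\<lambda>x. q x - q (x - y)) UNIV) / norm y powr (real CARD('n) + lam * p))
    = ennreal (enn2real (lp_int p (\<lambda>x. q' x - q' (x - y)) UNIV) / norm y powr (real CARD('n) + lam * p))"
    by simp
qed

lemma Lq_int_eq_nn_integral:
  fixes q :: "real^'n \<Rightarrow> complex"
  assumes q[measurable]: "q \<in> borel_measurable borel" and p: "0 < p" and fin: "lp_int p q UNIV < \<infinity>"
  shows "Lq_int p lam q = (\<integral>\<^sup>+ z. \<integral>\<^sup>+ x. ennreal (norm (q x - q (x - z)) powr p
                               / norm z powr (real CARD('n) + lam * p)) \<partial>lborel \<partial>lborel)"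
  unfolding Lq_int_def nn_integral_completion
proof (intro nn_integral_cong)
  fix z :: "real^'n"
  define s where "s = real CARD('n) + lam * p"
  let ?X = "\<integral>\<^sup>+ x. ennreal (norm (q x - q (x - z)) powr p) \<partial>lborel"
  have "?X < \<infinity>" by (rule lp_int_translate_diff_finite[OF q p fin])
  then have "ennreal (enn2real ?X / norm z powr s) = ?X * ennreal (1 / norm z powr s)"
    by (cases ?X rule: ennreal_cases) (auto simp: ennreal_mult'[symmetric])
  also have "\<dots> = (\<integral>\<^sup>+ x. ennreal (norm (q x - q (x - z)) powr p) * ennreal (1 / norm z powr s) \<partial>lborel)"
    by (rule nn_integral_multc[symmetric]) measurable
  also have "\<dots> = (\<integral>\<^sup>+ x. ennreal (norm (q x - q (x - z)) powr p / norm z powr s) \<partial>lborel)"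
    by (intro nn_integral_cong) (simp add: ennreal_mult'[symmetric])
  finally show "ennreal (enn2real (lp_int p (\<lambda>x. q x - q (x - z)) UNIV) / norm z powr s)
      = (\<integral>\<^sup>+ x. ennreal (norm (q x - q (x - z)) powr p / norm z powr s) \<partial>lborel)"
    by (simp add: lp_int_UNIV)
qed

lemma norm_SB_defect_le:
  fixes q :: "real^'n \<Rightarrow> complex" and h A :: real
  assumes q[measurable]: "q \<in> borel_measurable borel" and h: "0 < h"
    and A: "(\<integral>\<^sup>+ z. ennreal (exp (- (norm (z::real^'n))\<^sup>2/(2*h))) \<partial>lborel) = ennreal A" and Apos: "0 < A"
  shows "ennreal (norm (q x - (1/A) *\<^sub>R SB_transform h q x))
     \<le> (\<integral>\<^sup>+ z. ennreal (exp (- (norm z)\<^sup>2/(2*h)) / A * norm (q x - q (x - z))) \<partial>lborel)"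
proof -
  define g where "g = (\<lambda>z::real^'n. exp (- (norm z)\<^sup>2/(2*h)) / A)"
  have [measurable]: "g \<in> borel_measurable borel" unfolding g_def by measurable
  have g0: "0 \<le> g z" for z unfolding g_def using Apos by simp
  have "(\<integral>\<^sup>+ z. ennreal (g z) \<partial>lborel) = ennreal 1"
    unfolding g_def using nn_integral_normalize_eq_1[OF _ _ A Apos] by simp
  then have g: "integrable lborel g" and g1: "(\<integral> z. g z \<partial>lborel) = 1"
    using nn_integral_eq_integrable[of g lborel 1] g0 by auto
  have "(\<lambda>z. g z *\<^sub>R q (x - z)) = (\<lambda>z. (1/A) *\<^sub>R (exp (- (norm z)\<^sup>2/(2*h)) *\<^sub>R q (x - z)))"
    by (simp add: g_def fun_eq_iff)
  then have "(1/A) *\<^sub>R SB_transform h q x = (\<integral> z. g z *\<^sub>R q (x - z) \<partial>lborel)"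
    unfolding SB_transform_lborel[OF q] by (simp only: integral_scaleR_right)
  then show ?thesis
    using norm_diff_integral_le[OF _ _ g0 g g1, of "\<lambda>z. q (x - z)" "q x"] by (simp add: g_def)
qed

lemma gaussian_jensen_integrand_le:
  fixes r h p lam n d A B :: real
  assumes h: "0 < h" and p: "1 \<le> p" and lam: "0 < lam" "lam \<le> 1" and n: "1 \<le> n"
    and A: "0 < A" and B: "0 < B" and d: "0 \<le> d" and rd: "0 < r \<or> d = 0"
  shows "exp (- r\<^sup>2 / (4*h)) / B * (B / A * exp (- r\<^sup>2 / (4*h)) * d) powr p
    \<le> (B powr (p-1) / A powr p * (2*(n+1)) powr ((n+1)*p/2) * h powr ((n + lam*p)/2))
       * (d powr p / r powr (n + lam*p))"
proof (cases "d = 0")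
  case True
  then show ?thesis by simp
next
  case False
  then have r: "0 < r" and dpos: "0 < d" using rd d by auto
  define s where "s = n + lam*p"
  have s0: "0 < s" using n p lam by (simp add: s_def add_pos_nonneg)
  define t where "t = r\<^sup>2 / (4*h)"
  have "exp (- t) / B * (B / A * exp (- t) * d) powr p
      = exp (- t) * exp (- t) powr p * (B powr p / B / A powr p) * d powr p"
    using A B dpos by (simp add: powr_mult powr_divide)
  also have "\<dots> = exp (- ((p+1) * t)) * (B powr (p-1) / A powr p) * d powr p"
    using B by (simp add: exp_powr_real exp_add[symmetric] powr_diff algebra_simps)
  finally have eq: "exp (- t) / B * (B / A * exp (- t) * d) powr p
      = exp (- ((p+1) * t)) * (B powr (p-1) / A powr p) * d powr p" .
  have "(p+1) * t = (p+1)/4 * (r\<^sup>2 / h)" by (simp add: t_def)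
  then have "exp (- ((p+1) * t)) * r powr s \<le> (s / (2 * ((p+1)/4))) powr (s/2) * h powr (s/2)"
    using exp_neg_square_mult_powr_le[of r h "(p+1)/4" s] r h p s0 by simp
  also have "\<dots> \<le> (2*(n+1)) powr ((n+1)*p/2) * h powr (s/2)"
    using gaussian_weight_constant_le[OF n p lam] by (intro mult_right_mono) (auto simp: s_def)
  finally have "exp (- ((p+1) * t)) \<le> (2*(n+1)) powr ((n+1)*p/2) * h powr (s/2) / r powr s"
    using r by (simp add: pos_le_divide_eq)
  then have "exp (- ((p+1) * t)) * (B powr (p-1) / A powr p * d powr p)
     \<le> ((2*(n+1)) powr ((n+1)*p/2) * h powr (s/2) / r powr s) * (B powr (p-1) / A powr p * d powr p)"
    by (rule mult_right_mono) simp
  then show ?thesis using eq by (simp add: t_def s_def mult_ac)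
qed

lemma SB_defect_powr_le:
  fixes q :: "real^'n \<Rightarrow> complex" and p lam h A B :: real
  assumes q[measurable]: "q \<in> borel_measurable borel" and p: "1 \<le> p" and lam: "0 < lam" "lam \<le> 1"
    and h: "0 < h"
    and A: "(\<integral>\<^sup>+ z. ennreal (exp (- (norm (z::real^'n))\<^sup>2/(2*h))) \<partial>lborel) = ennreal A" and Apos: "0 < A"
    and B: "(\<integral>\<^sup>+ z. ennreal (exp (- (norm (z::real^'n))\<^sup>2/(4*h))) \<partial>lborel) = ennreal B" and Bpos: "0 < B"
  defines "Q \<equiv> B powr (p-1) / A powr p * (2*(real CARD('n)+1)) powr ((real CARD('n)+1)*p/2)
                 * h powr ((real CARD('n) + lam*p)/2)"
  shows "ennreal (norm (q x - (1/A) *\<^sub>R SB_transform h q x) powr p)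
      \<le> (\<integral>\<^sup>+ z. ennreal (Q * (norm (q x - q (x - z)) powr p / norm z powr (real CARD('n) + lam*p))) \<partial>lborel)"
proof -
  define \<phi> where "\<phi> = (\<lambda>z::real^'n. exp (- (norm z)\<^sup>2/(4*h)) / B)"
  define F where "F = (\<lambda>z::real^'n. B / A * exp (- (norm z)\<^sup>2/(4*h)) * norm (q x - q (x - z)))"
  have [measurable]: "\<phi> \<in> borel_measurable lborel" "F \<in> borel_measurable lborel"
    unfolding \<phi>_def F_def by measurable
  have \<phi>1: "(\<integral>\<^sup>+ z. ennreal (\<phi> z) \<partial>lborel) = 1"
    unfolding \<phi>_def by (rule nn_integral_normalize_eq_1[OF _ _ B Bpos]) auto
  have "\<phi> z * F z = exp (- (norm z)\<^sup>2/(2*h)) / A * norm (q x - q (x - z))" for z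
    using Bpos by (simp add: \<phi>_def F_def field_simps exp_add[symmetric])
  then have defect: "ennreal (norm (q x - (1/A) *\<^sub>R SB_transform h q x)) \<le> (\<integral>\<^sup>+ z. ennreal (\<phi> z * F z) \<partial>lborel)"
    using norm_SB_defect_le[OF q h A Apos] by simp
  have "ennreal (norm (q x - (1/A) *\<^sub>R SB_transform h q x) powr p)
      \<le> (\<integral>\<^sup>+ z. ennreal (\<phi> z * F z powr p) \<partial>lborel)"
    by (rule nn_integral_jensen_powr[OF _ _ _ _ \<phi>1 p _ defect]) (use Apos Bpos in \<open>auto simp: \<phi>_def F_def\<close>)
  also have "\<dots> \<le> (\<integral>\<^sup>+ z. ennreal (Q * (norm (q x - q (x - z)) powr p / norm z powr (real CARD('n) + lam*p))) \<partial>lborel)"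
  proof (intro nn_integral_mono ennreal_leI)
    fix z :: "real^'n"
    have "0 < norm z \<or> norm (q x - q (x - z)) = 0" by (cases "z = 0") auto
    then show "\<phi> z * F z powr p \<le> Q * (norm (q x - q (x - z)) powr p / norm z powr (real CARD('n) + lam*p))"
      unfolding \<phi>_def F_def Q_def
      by (intro gaussian_jensen_integrand_le[OF h p lam _ Apos Bpos]) auto
  qed
  finally show ?thesis .
qed

lemma lp_int_SB_defect_le:
  fixes q :: "real^'n \<Rightarrow> complex" and p lam h A B :: real
  assumes q[measurable]: "q \<in> borel_measurable borel" and p: "1 \<le> p" and lam: "0 < lam" "lam \<le> 1"
    and h: "0 < h" and fin: "lp_int p q UNIV < \<infinity>"
    and A: "(\<integral>\<^sup>+ z. ennreal (exp (- (norm (z::real^'n))\<^sup>2/(2*h))) \<partial>lborel) = ennreal A" and Apos: "0 < A"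
    and B: "(\<integral>\<^sup>+ z. ennreal (exp (- (norm (z::real^'n))\<^sup>2/(4*h))) \<partial>lborel) = ennreal B" and Bpos: "0 < B"
  defines "Q \<equiv> B powr (p-1) / A powr p * (2*(real CARD('n)+1)) powr ((real CARD('n)+1)*p/2)
                 * h powr ((real CARD('n) + lam*p)/2)"
  shows "lp_int p (\<lambda>x. q x - (1/A) *\<^sub>R SB_transform h q x) UNIV \<le> ennreal Q * Lq_int p lam q"
proof -
  define s where "s = real CARD('n) + lam * p"
  have Q0: "0 \<le> Q" unfolding Q_def by simp
  have "lp_int p (\<lambda>x. q x - (1/A) *\<^sub>R SB_transform h q x) UNIV
      \<le> (\<integral>\<^sup>+ x. \<integral>\<^sup>+ z. ennreal (Q * (norm (q x - q (x - z)) powr p / norm z powr s)) \<partial>lborel \<partial>lborel)"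
    unfolding lp_int_UNIV s_def Q_def
    by (intro nn_integral_mono SB_defect_powr_le[OF q p lam h A Apos B Bpos])
  also have "\<dots> = (\<integral>\<^sup>+ z. \<integral>\<^sup>+ x. ennreal Q * ennreal (norm (q x - q (x - z)) powr p / norm z powr s) \<partial>lborel \<partial>lborel)"
    using Q0 by (subst lborel_pair.Fubini'[symmetric]) (measurable, simp add: ennreal_mult'[symmetric])
  also have "\<dots> = ennreal Q * (\<integral>\<^sup>+ z. \<integral>\<^sup>+ x. ennreal (norm (q x - q (x - z)) powr p / norm z powr s) \<partial>lborel \<partial>lborel)"
    by (simp add: nn_integral_cmult)
  also have "\<dots> = ennreal Q * Lq_int p lam q"
    using Lq_int_eq_nn_integral[OF q _ fin] p by (simp add: s_def)
  finally show ?thesis .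
qed

lemma gaussian_mass_ratio_le:
  fixes p h n Lo Ub A B :: real
  assumes p: "1 \<le> p" and h: "0 < h" and n: "0 \<le> n" and Lo: "0 < Lo"
    and A: "Lo * h powr (n/2) \<le> A" and B: "0 < B" "B \<le> Ub * (2*h) powr (n/2)"
  shows "B powr (p-1) / A powr p \<le> (max 1 Ub * 2 powr (n/2) / Lo) powr p * h powr (- n/2)"
proof -
  define X where "X = max 1 Ub * 2 powr (n/2)"
  have "1 * 1 \<le> max 1 Ub * 2 powr (n/2)" using n by (intro mult_mono ge_one_powr_ge_zero) auto
  then have X1: "1 \<le> X" unfolding X_def by simp
  have "B \<le> Ub * 2 powr (n/2) * h powr (n/2)" using B h by (simp add: powr_mult mult.assoc)
  also have "\<dots> \<le> X * h powr (n/2)" unfolding X_def by (intro mult_right_mono) auto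
  finally have "B powr (p-1) \<le> (X * h powr (n/2)) powr (p-1)"
    using B p by (intro powr_mono2) auto
  also have "\<dots> = X powr (p-1) * h powr (n/2 * (p-1))"
    using X1 by (simp add: powr_mult powr_powr)
  also have "\<dots> \<le> X powr p * h powr (n/2 * (p-1))"
    using X1 by (intro mult_right_mono powr_mono) auto
  finally have num: "B powr (p-1) \<le> X powr p * h powr (n/2 * (p-1))" .
  have "Lo powr p * h powr (n/2 * p) = (Lo * h powr (n/2)) powr p"
    using Lo by (simp add: powr_mult powr_powr)
  also have "\<dots> \<le> A powr p" using A Lo h p by (intro powr_mono2) auto
  finally have den: "Lo powr p * h powr (n/2 * p) \<le> A powr p" .
  have "B powr (p-1) / A powr p \<le> X powr p * h powr (n/2 * (p-1)) / (Lo powr p * h powr (n/2 * p))"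
    using num den Lo h by (intro frac_le) auto
  also have "h powr (n/2 * (p-1)) = h powr (- n/2) * h powr (n/2 * p)"
    by (simp add: powr_add[symmetric] diff_divide_distrib algebra_simps)
  also have "X powr p * (h powr (- n/2) * h powr (n/2 * p)) / (Lo powr p * h powr (n/2 * p))
      = (X / Lo) powr p * h powr (- n/2)"
    using Lo h X1 by (simp add: powr_divide)
  finally show ?thesis unfolding X_def .
qed

lemma defect_constant_le:
  fixes p h n lam A B Lo Ub :: real
  assumes p: "1 \<le> p" and h: "0 < h" and n: "0 \<le> n" and Lo: "0 < Lo"
    and A: "Lo * h powr (n/2) \<le> A" and B: "0 < B" "B \<le> Ub * (2*h) powr (n/2)"
  shows "B powr (p-1) / A powr p * (2*(n+1)) powr ((n+1)*p/2) * h powr ((n+lam*p)/2)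
     \<le> (max 1 Ub * 2 powr (n/2) * (2*(n+1)) powr ((n+1)/2) / Lo * h powr (lam/2)) powr p"
proof -
  define X where "X = max 1 Ub * 2 powr (n/2) / Lo"
  define W where "W = 2*(n+1)"
  have X: "0 \<le> X" unfolding X_def using Lo by simp
  have W: "0 < W" unfolding W_def using n by simp
  have "B powr (p-1) / A powr p * W powr ((n+1)*p/2) * h powr ((n+lam*p)/2)
      \<le> X powr p * h powr (- n/2) * W powr ((n+1)*p/2) * h powr ((n+lam*p)/2)"
    using gaussian_mass_ratio_le[OF p h n Lo A B] by (intro mult_right_mono) (auto simp: X_def)
  also have "\<dots> = (X * W powr ((n+1)/2) * h powr (lam/2)) powr p"
    using X W h by (simp add: powr_mult powr_powr powr_add[symmetric] add_divide_distrib algebra_simps)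
  finally show ?thesis unfolding X_def W_def by (simp add: mult.assoc)
qed

definition defect_const :: "nat \<Rightarrow> real" where
  "defect_const d = max 1 (gaussian_mass_upper_const d) * 2 powr (real d/2)
     * (2*(real d+1)) powr ((real d+1)/2) / gaussian_mass_lower_const d"

definition SB_const :: "nat \<Rightarrow> real" where
  "SB_const d = 2 * max (defect_const d) (1 / gaussian_mass_lower_const d)"

lemma SB_const_pos: "0 < SB_const d"
  unfolding SB_const_def using gaussian_mass_lower_const_pos[of d] by (simp add: less_max_iff_disj)

lemma SB_defect_estimate:
  fixes q :: "real^'n \<Rightarrow> complex" and p lam h :: real
  assumes q[measurable]: "q \<in> borel_measurable borel" and p: "1 \<le> p" and fin: "lp_int p q UNIV < \<infinity>"
    and lam: "0 < lam" "lam \<le> 1" and h: "0 < h"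
  obtains A where "gaussian_mass_lower_const CARD('n) * h powr (real CARD('n) / 2) \<le> A"
    and "lp_int p (\<lambda>x. q x - (1/A) *\<^sub>R SB_transform h q x) UNIV
           \<le> ennreal ((defect_const CARD('n) * h powr (lam/2)) powr p) * Lq_int p lam q"
proof -
  let ?n = "real CARD('n)"
  let ?Lo = "gaussian_mass_lower_const CARD('n)" and ?Ub = "gaussian_mass_upper_const CARD('n)"
  have Lo: "0 < ?Lo" by (rule gaussian_mass_lower_const_pos)
  obtain A where A: "(\<integral>\<^sup>+ z. ennreal (exp (- (norm (z::real^'n))\<^sup>2/(2*h))) \<partial>lborel) = ennreal A"
    and ALo: "?Lo * h powr (?n/2) \<le> A"
    using gaussian_mass_bounds[OF h, where 'a="real^'n"] by auto
  obtain B where B: "(\<integral>\<^sup>+ z. ennreal (exp (- (norm (z::real^'n))\<^sup>2/(4*h))) \<partial>lborel) = ennreal B"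
    and BLo: "?Lo * (2*h) powr (?n/2) \<le> B" and BUb: "B \<le> ?Ub * (2*h) powr (?n/2)"
    using gaussian_mass_bounds[of "2*h", where 'a="real^'n"] h by auto
  have "0 < ?Lo * h powr (?n/2)" "0 < ?Lo * (2*h) powr (?n/2)" using Lo h by simp_all
  then have Apos: "0 < A" and Bpos: "0 < B" using ALo BLo by linarith+
  show ?thesis
  proof (rule that[OF ALo order_trans[OF lp_int_SB_defect_le[OF q p lam h fin A Apos B Bpos]]])
    show "ennreal (B powr (p-1) / A powr p * (2*(?n+1)) powr ((?n+1)*p/2) * h powr ((?n + lam*p)/2))
          * Lq_int p lam q \<le> ennreal ((defect_const CARD('n) * h powr (lam/2)) powr p) * Lq_int p lam q"
      using defect_constant_le[OF p h _ Lo ALo Bpos BUb]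
      by (intro mult_right_mono ennreal_leI) (auto simp: defect_const_def)
  qed
qed

lemma SB_estimate_borel:
  fixes q :: "real^'n \<Rightarrow> complex" and p lam h :: real
  assumes q[measurable]: "q \<in> borel_measurable borel" and p: "1 \<le> p" and fin: "lp_int p q UNIV < \<infinity>"
    and G[measurable]: "G \<in> sets borel" and lam: "0 < lam" "lam \<le> 1" and Lfin: "Lq_int p lam q < \<infinity>"
    and h: "0 < h" and Tfin: "lp_int p (SB_transform h q) G < \<infinity>"
  shows "lp_norm p q G \<le> SB_const CARD('n) *
           (h powr (- real CARD('n) / 2) * lp_norm p (SB_transform h q) G + Lq p lam q * h powr (lam / 2))"
proof -
  let ?n = "real CARD('n)" and ?T = "SB_transform h q" and ?Lo = "gaussian_mass_lower_const CARD('n)"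
  define K where "K = defect_const CARD('n)"
  define M where "M = max K (1/?Lo)"
  have Lo: "0 < ?Lo" by (rule gaussian_mass_lower_const_pos)
  have K: "0 \<le> K" unfolding K_def defect_const_def using Lo by simp
  obtain A where ALo: "?Lo * h powr (?n/2) \<le> A"
    and "lp_int p (\<lambda>x. q x - (1/A) *\<^sub>R ?T x) UNIV \<le> ennreal ((K * h powr (lam/2)) powr p) * Lq_int p lam q"
    using SB_defect_estimate[OF q p fin lam h] unfolding K_def by blast
  then have defect: "lp_int p (\<lambda>x. q x - (1/A) *\<^sub>R ?T x) G \<le> ennreal ((K * h powr (lam/2)) powr p) * Lq_int p lam q"
    using lp_int_le_UNIV order_trans by blast
  have "0 < ?Lo * h powr (?n/2)" using Lo h by simp
  then have Apos: "0 < A" and A_inv: "1/A \<le> 1/?Lo * h powr (- ?n/2)"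
    using ALo h by (auto simp: powr_minus field_simps intro: order_trans[OF _ ALo])
  have [measurable]: "?T \<in> borel_measurable borel" by (rule borel_measurable_SB_transform[OF q])
  have "lp_norm p q G = lp_norm p (\<lambda>x. (q x - (1/A) *\<^sub>R ?T x) + (1/A) *\<^sub>R ?T x) G" by simp
  also have "\<dots> \<le> 2 * (lp_norm p (\<lambda>x. q x - (1/A) *\<^sub>R ?T x) G + lp_norm p (\<lambda>x. (1/A) *\<^sub>R ?T x) G)"
  proof (rule lp_norm_add_le)
    show "lp_int p (\<lambda>x. q x - (1/A) *\<^sub>R ?T x) G < \<infinity>"
      using defect Lfin by (auto simp: ennreal_mult_less_top intro: le_less_trans)
    show "lp_int p (\<lambda>x. (1/A) *\<^sub>R ?T x) G < \<infinity>"
      using Tfin Apos by (simp add: lp_int_scaleR ennreal_mult_less_top)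
  qed (use p in auto)
  also have "\<dots> = 2 * (lp_norm p (\<lambda>x. q x - (1/A) *\<^sub>R ?T x) G + 1/A * lp_norm p ?T G)"
    using Apos p by (simp add: lp_norm_scaleR)
  also have "\<dots> \<le> 2 * (M * (Lq p lam q * h powr (lam/2)) + M * (h powr (- ?n/2) * lp_norm p ?T G))"
  proof (intro mult_left_mono add_mono)
    have "lp_norm p (\<lambda>x. q x - (1/A) *\<^sub>R ?T x) G \<le> K * h powr (lam/2) * Lq p lam q"
      using lp_norm_le_of_lp_int_le[OF defect Lfin] K p by (simp add: Lq_def)
    also have "\<dots> \<le> M * (Lq p lam q * h powr (lam/2))"
      unfolding M_def by (simp add: mult_right_mono Lq_def mult_ac)
    finally show "lp_norm p (\<lambda>x. q x - (1/A) *\<^sub>R ?T x) G \<le> M * (Lq p lam q * h powr (lam/2))" .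
    have "1/A * lp_norm p ?T G \<le> 1/?Lo * h powr (- ?n/2) * lp_norm p ?T G"
      using A_inv by (rule mult_right_mono) (simp add: lp_norm_def)
    also have "\<dots> \<le> M * (h powr (- ?n/2) * lp_norm p ?T G)"
      unfolding mult.assoc M_def by (intro mult_right_mono) (auto simp: lp_norm_def)
    finally show "1/A * lp_norm p ?T G \<le> M * (h powr (- ?n/2) * lp_norm p ?T G)" .
  qed simp
  also have "\<dots> = SB_const CARD('n) * (h powr (- ?n / 2) * lp_norm p ?T G + Lq p lam q * h powr (lam / 2))"
    unfolding SB_const_def M_def K_def by (simp add: algebra_simps)
  finally show ?thesis .
qed

theorem lemma2p8:
  shows "\<exists>C>0. \<forall>(p::real) (q::real^'n \<Rightarrow> complex) (G::(real^'n) set) (lam::real).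
     1 \<le> p \<and> q \<in> borel_measurable lebesgue \<and> lp_int p q UNIV < \<infinity> \<and> open G \<and>
     0 < lam \<and> lam < 1 \<and> Lq_int p lam q < \<infinity> \<longrightarrow>
     (\<forall>h. 0 < h \<and> h \<le> 1 \<and> lp_int p (SB_transform h q) G < \<infinity> \<longrightarrow>
        lp_norm p q G \<le> C * (h powr (- real CARD('n) / 2) * lp_norm p (SB_transform h q) G
                              + Lq p lam q * h powr (lam / 2)))"
proof (intro exI[of _ "SB_const CARD('n)"] conjI allI impI)
  show "0 < SB_const CARD('n)" by (rule SB_const_pos)
next
  fix p lam h :: real and q :: "real^'n \<Rightarrow> complex" and G :: "(real^'n) set"
  assume "1 \<le> p \<and> q \<in> borel_measurable lebesgue \<and> lp_int p q UNIV < \<infinity> \<and> open G \<and>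
     0 < lam \<and> lam < 1 \<and> Lq_int p lam q < \<infinity>"
    and "0 < h \<and> h \<le> 1 \<and> lp_int p (SB_transform h q) G < \<infinity>"
  then have p: "1 \<le> p" and qm: "q \<in> borel_measurable lebesgue" and fin: "lp_int p q UNIV < \<infinity>"
    and G: "open G" and lam: "0 < lam" "lam < 1" and Lfin: "Lq_int p lam q < \<infinity>"
    and h: "0 < h" and Tfin: "lp_int p (SB_transform h q) G < \<infinity>"
    by auto
  obtain q' where q': "q' \<in> borel_measurable borel" and ae: "AE x in lborel. q x = q' x"
    using lebesgue_measurable_AE_borel[OF qm] by blast
  have "SB_transform h q = SB_transform h q'" by (rule SB_transform_cong_AE[OF qm q' ae])
  moreover have "lp_int p q S = lp_int p q' S" for S by (rule lp_int_cong_AE[OF ae])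
  moreover have "Lq_int p lam q = Lq_int p lam q'" by (rule Lq_int_cong_AE[OF ae])
  \<comment> \<open>the estimate holds for every \<open>h > 0\<close>\<close>
  ultimately show "lp_norm p q G \<le> SB_const CARD('n) * (h powr (- real CARD('n) / 2)
      * lp_norm p (SB_transform h q) G + Lq p lam q * h powr (lam / 2))"
    using SB_estimate_borel[OF q' p _ _ lam(1) _ _ h, of G] fin G Lfin Tfin lam(2)
    by (simp add: lp_norm_def Lq_def borel_open)
qed

end
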